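(* Let $\Sigma\in\mathbb{R}^{p\times p}$ be real symmetric with all eigenvalues in $[\kappa_{\min},\kappa_{\max}]$, $0<\kappa_{\min}\le\kappa_{\max}<\infty$, and block-diagonal with blocks $\Sigma_1,\dots,\Sigma_k$, each of size at most a constant $m$. Let $X\in\mathbb{R}^{n\times p}$ have independent rows $x_i=z_i\Sigma^{1/2}$, where each $z_i$ has independent sub-Gaussian entries with mean $0$, variance $1$ and sub-Gaussian norm bounded by a constant. Let $\hat\Sigma$ be block-diagonal with blocks $\hat\Sigma_j=\frac1nX_j^\top X_j$, where $X_j$ is the submatrix of columns of $X$ corresponding to block $j$. Then, as $n\to\infty$ with $p/n\to\delta\in(0,\infty)$, $\|\hat\Sigma-\Sigma\|_{\mathrm{op}}\overset{P}{\to}0$.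
   Context: $\|\cdot\|_{\mathrm{op}}$ denotes the operator norm. The block structure of $\hat\Sigma$ is the same as that of $\Sigma$. *)

theory Defs
  imports "HOL-Probability.Probability" "Jordan_Normal_Form.Char_Poly"
begin

definition vnorm :: "real vec \<Rightarrow> real" where
  "vnorm v = sqrt (v \<bullet> v)"

definition op_norm :: "real mat \<Rightarrow> real" where
  "op_norm A = (SUP v \<in> {v \<in> carrier_vec (dim_col A). vnorm v \<le> 1}. vnorm (A *\<^sub>v v))"

definition blk_start :: "nat list \<Rightarrow> nat \<Rightarrow> nat" where
  "blk_start bs t = sum_list (take t bs)"

definition same_block :: "nat list \<Rightarrow> nat \<Rightarrow> nat \<Rightarrow> bool" where
  "same_block bs i j = (\<exists>t < length bs.
      blk_start bs t \<le> i \<and> i < blk_start bs (Suc t) \<and>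
      blk_start bs t \<le> j \<and> j < blk_start bs (Suc t))"

definition block_diagonal :: "nat list \<Rightarrow> real mat \<Rightarrow> bool" where
  "block_diagonal bs A = (\<forall>i < dim_row A. \<forall>j < dim_col A. \<not> same_block bs i j \<longrightarrow> A $$ (i, j) = 0)"

text \<open>Block-diagonal sample covariance: block t equals (1/n) X_t^T X_t, where X_t are the columns of X in block t.\<close>
definition block_sample_cov :: "nat list \<Rightarrow> real mat \<Rightarrow> real mat" where
  "block_sample_cov bs X = mat (dim_col X) (dim_col X) (\<lambda>(i, j).
      if same_block bs i j
      then (1 / real (dim_row X)) * (\<Sum>l < dim_row X. X $$ (l, i) * X $$ (l, j))
      else 0)"

definition subgaussian_norm_le :: "'a measure \<Rightarrow> ('a \<Rightarrow> real) \<Rightarrow> real \<Rightarrow> bool" where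
  "subgaussian_norm_le M Z K = ((\<integral>\<^sup>+ x. ennreal (exp ((Z x)\<^sup>2 / K\<^sup>2)) \<partial>M) \<le> 2)"

end

theory Submission
  imports Defs "Jordan_Normal_Form.Spectral_Radius"
begin

(* Inside a block, the (i, j) entry of the estimate minus Sigma is the average over the n rows of
   the centred products <S e_i, z_l> <S e_j, z_l> - Sigma_ij, which are independent across rows.
   The columns of S = Sigma^(1/2) have squared norm Sigma_ii <= kappa_max, and linear combinations
   of independent sub-Gaussians have bounded eighth moments, so these products have uniformly
   bounded fourth moments.  Hence the fourth moment of their sum is O(n^2), and Markov's inequality
   bounds the probability that one entry deviates by eta by O(1/(n^2 eta^4)).  A block-diagonal
   matrix with blocks of size at most m and entries at most eta has operator norm at most m eta
   (Schur's test), so a union bound over the at most p m in-block entries gives O(p/n^2) = O(1/n). *)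

section \<open>Diagonal entries of symmetric matrices\<close>

lemma pow_mat_add:
  assumes A: "A \<in> carrier_mat n n"
  shows "A ^\<^sub>m (k + l) = A ^\<^sub>m k * A ^\<^sub>m l"
proof (induct l)
  case (Suc l)
  have "A ^\<^sub>m (k + Suc l) = (A ^\<^sub>m k * A ^\<^sub>m l) * A" using Suc by simp
  also have "\<dots> = A ^\<^sub>m k * (A ^\<^sub>m l * A)"
    using A by (intro assoc_mult_mat[of _ n n _ n _ n]) auto
  finally show ?case by simp
qed (use A in simp)

lemma transpose_pow_mat:
  fixes A :: "'a :: comm_semiring_1 mat"
  assumes A: "A \<in> carrier_mat n n"
  shows "transpose_mat (A ^\<^sub>m k) = transpose_mat A ^\<^sub>m k"
proof (induct k)
  case (Suc k)
  have "transpose_mat (A ^\<^sub>m Suc k) = transpose_mat A * transpose_mat A ^\<^sub>m k"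
    using A Suc by (simp add: transpose_mult[of _ n n _ n])
  also have "\<dots> = transpose_mat A ^\<^sub>m (1 + k)"
    using pow_mat_add[of "transpose_mat A" n 1 k] A by simp
  finally show ?case by simp
qed (use A in simp)

lemma sym_mat_entry:
  assumes "A \<in> carrier_mat n n" and "transpose_mat A = A" and "i < n" and "j < n"
  shows "A $$ (j, i) = A $$ (i, j)"
  using assms by (metis carrier_matD index_transpose_mat(1))

lemma sym_diag_square_le:
  fixes B :: "real mat"
  assumes B: "B \<in> carrier_mat n n" and sym: "transpose_mat B = B" and i: "i < n"
  shows "(B $$ (i, i))\<^sup>2 \<le> (B * B) $$ (i, i)"
proof -
  have "(B * B) $$ (i, i) = (\<Sum>j<n. B $$ (i, j) * B $$ (j, i))"
    using B i by (simp add: scalar_prod_def atLeast0LessThan)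
  also have "\<dots> = (\<Sum>j<n. (B $$ (i, j))\<^sup>2)"
    using sym_mat_entry[OF B sym i] by (simp add: power2_eq_square)
  also have "\<dots> \<ge> (\<Sum>j\<in>{i}. (B $$ (i, j))\<^sup>2)"
    using i by (intro sum_mono2) auto
  finally show ?thesis by simp
qed

lemma sym_abs_diag_pow_le_diag_pow_mat:
  fixes A :: "real mat"
  assumes A: "A \<in> carrier_mat n n" and sym: "transpose_mat A = A" and i: "i < n"
  shows "\<bar>A $$ (i, i)\<bar> ^ (2 ^ Suc k) \<le> (A ^\<^sub>m (2 ^ Suc k)) $$ (i, i)"
proof (induct k)
  case 0
  have "A ^\<^sub>m 2 = A * A" using A by (simp add: numeral_2_eq_2)
  then show ?case using sym_diag_square_le[OF A sym i] by simp
next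
  case (Suc k)
  let ?B = "A ^\<^sub>m (2 ^ Suc k)"
  have B: "?B \<in> carrier_mat n n" using A by simp
  have symB: "transpose_mat ?B = ?B" using transpose_pow_mat[OF A] sym by simp
  have "\<bar>A $$ (i, i)\<bar> ^ (2 ^ Suc (Suc k)) = (\<bar>A $$ (i, i)\<bar> ^ (2 ^ Suc k))\<^sup>2"
    by (simp add: power_mult[symmetric] mult.commute)
  also have "\<dots> \<le> (?B $$ (i, i))\<^sup>2"
    using Suc by (intro power_mono) auto
  also have "\<dots> \<le> (?B * ?B) $$ (i, i)"
    by (rule sym_diag_square_le[OF B symB i])
  also have "?B * ?B = A ^\<^sub>m (2 ^ Suc (Suc k))"
    using pow_mat_add[OF A, of "2 ^ Suc k" "2 ^ Suc k"] by (simp add: mult_2)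
  finally show ?case .
qed

text \<open>\<open>v\<^sup>* A v\<close> is real because \<open>A\<close> is real symmetric, and equals \<open>l |v|\<^sup>2\<close> for an eigenvector \<open>v\<close>.\<close>

lemma sym_eigenvalue_of_real_mat_real:
  fixes A :: "real mat"
  assumes A: "A \<in> carrier_mat n n" and sym: "transpose_mat A = A"
    and ev: "eigenvalue (map_mat complex_of_real A) l"
  shows "l \<in> \<real>"
proof -
  obtain v where v: "v \<in> carrier_vec n" "v \<noteq> 0\<^sub>v n" "map_mat complex_of_real A *\<^sub>v v = l \<cdot>\<^sub>v v"
    using ev A unfolding eigenvalue_def eigenvector_def by auto
  have Av: "(\<Sum>j<n. of_real (A $$ (i, j)) * v $ j) = l * v $ i" if "i < n" for i
    using arg_cong[OF v(3), of "\<lambda>w. w $ i"] that A v(1)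
    by (simp add: scalar_prod_def atLeast0LessThan)
  define q where "q = (\<Sum>i<n. cnj (v $ i) * (\<Sum>j<n. of_real (A $$ (i, j)) * v $ j))"
  define N where "N = (\<Sum>i<n. (cmod (v $ i))\<^sup>2)"
  have "q = (\<Sum>i<n. cnj (v $ i) * (l * v $ i))"
    unfolding q_def by (intro sum.cong refl) (simp add: Av)
  also have "\<dots> = (\<Sum>i<n. l * of_real ((cmod (v $ i))\<^sup>2))"
    by (intro sum.cong refl, subst complex_norm_square) (simp add: mult_ac)
  finally have q: "q = l * of_real N"
    unfolding N_def by (simp add: sum_distrib_left)
  have "cnj q = (\<Sum>j<n. \<Sum>i<n. v $ i * of_real (A $$ (i, j)) * cnj (v $ j))"
    unfolding q_def by (subst sum.swap) (simp add: sum_distrib_left mult_ac)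
  also have "\<dots> = q"
    unfolding q_def by (auto simp: sum_distrib_left mult_ac sym_mat_entry[OF A sym] intro!: sum.cong)
  finally have "cnj q = q" .
  obtain i where i: "i < n" "v $ i \<noteq> 0"
    using v(1,2) by (metis eq_vecI carrier_vecD index_zero_vec)
  have "0 < (\<Sum>i\<in>{i}. (cmod (v $ i))\<^sup>2)" using i by simp
  also have "\<dots> \<le> N" unfolding N_def using i by (intro sum_mono2) auto
  finally have "N \<noteq> 0" by simp
  with \<open>cnj q = q\<close> q have "cnj l = l" by simp
  then show ?thesis by (simp add: Reals_cnj_iff)
qed

lemma eigenvalue_of_real_mat_iff:
  fixes A :: "real mat"
  assumes A: "A \<in> carrier_mat n n"
  shows "eigenvalue (map_mat complex_of_real A) (of_real r) \<longleftrightarrow> eigenvalue A r"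
  using A by (simp add: eigenvalue_root_char_poly of_real_hom.char_poly_hom of_real_hom.poly_map_poly)

lemma eigenvalue_smult_mat:
  fixes A :: "'a :: field mat"
  assumes A: "A \<in> carrier_mat n n" and ev: "eigenvalue (a \<cdot>\<^sub>m A) e" and a: "a \<noteq> 0"
  shows "eigenvalue A (e / a)"
proof -
  obtain v where v: "v \<in> carrier_vec n" "v \<noteq> 0\<^sub>v n" "(a \<cdot>\<^sub>m A) *\<^sub>v v = e \<cdot>\<^sub>v v"
    using ev A unfolding eigenvalue_def eigenvector_def by auto
  have "A *\<^sub>v v = (e / a) \<cdot>\<^sub>v v"
  proof (rule eq_vecI)
    fix i assume "i < dim_vec ((e / a) \<cdot>\<^sub>v v)"
    then have i: "i < n" using v(1) by simp
    have "a * (A *\<^sub>v v) $ i = e * v $ i"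
      using arg_cong[OF v(3), of "\<lambda>w. w $ i"] A v(1) i
      by (simp add: scalar_prod_def sum_distrib_left mult.assoc)
    then show "(A *\<^sub>v v) $ i = ((e / a) \<cdot>\<^sub>v v) $ i"
      using a i v(1) by (simp add: field_simps)
  qed (use A v in simp)
  then show ?thesis using A v unfolding eigenvalue_def eigenvector_def by auto
qed

lemma sym_spectral_radius_of_real_mat_less_1:
  fixes A :: "real mat"
  assumes A: "A \<in> carrier_mat n n" and sym: "transpose_mat A = A" and n: "0 < n"
    and ev: "\<And>e. eigenvalue A e \<Longrightarrow> \<bar>e\<bar> < 1"
  shows "spectral_radius (map_mat complex_of_real A) < 1"
proof -
  have "cmod l < 1" if l: "eigenvalue (map_mat complex_of_real A) l" for l
  proof -
    obtain r where "l = of_real r" using sym_eigenvalue_of_real_mat_real[OF A sym l] Reals_cases by blast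
    then show ?thesis using l ev eigenvalue_of_real_mat_iff[OF A] by auto
  qed
  moreover have "spectral_radius (map_mat complex_of_real A) \<in> cmod ` spectrum (map_mat complex_of_real A)"
    using spectral_radius_mem_max(1)[of _ n] A n by simp
  ultimately show ?thesis unfolding spectrum_def by auto
qed

text \<open>The diagonal entries of \<open>A\<^sup>2\<^sup>k\<close> grow like \<open>|A\<^sub>i\<^sub>i|\<^sup>2\<^sup>k\<close>.\<close>

lemma sym_abs_diag_le_1_of_bounded_powers:
  fixes A :: "real mat"
  assumes A: "A \<in> carrier_mat n n" and sym: "transpose_mat A = A" and i: "i < n"
    and C: "\<And>k. norm_bound (map_mat complex_of_real A ^\<^sub>m k) C"
  shows "\<bar>A $$ (i, i)\<bar> \<le> 1"
proof (rule ccontr)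
  assume "\<not> \<bar>A $$ (i, i)\<bar> \<le> 1"
  then obtain k where a: "1 < \<bar>A $$ (i, i)\<bar>" and k: "C < \<bar>A $$ (i, i)\<bar> ^ k"
    using real_arch_pow by force
  have "k \<le> 2 ^ Suc k" by (meson Suc_leD less_exp less_imp_le)
  then have "\<bar>A $$ (i, i)\<bar> ^ k \<le> \<bar>A $$ (i, i)\<bar> ^ (2 ^ Suc k)"
    using a by (intro power_increasing) auto
  also have "\<dots> \<le> (A ^\<^sub>m (2 ^ Suc k)) $$ (i, i)"
    by (rule sym_abs_diag_pow_le_diag_pow_mat[OF A sym i])
  also have "\<dots> \<le> cmod ((map_mat complex_of_real A ^\<^sub>m (2 ^ Suc k)) $$ (i, i))"
    using i A by (simp add: of_real_hom.mat_hom_pow[OF A, symmetric])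
  also have "\<dots> \<le> C" using C i A unfolding norm_bound_def by simp
  finally show False using k by simp
qed

text \<open>If \<open>|A\<^sub>i\<^sub>i| > c > \<kappa>\<close>, then \<open>A/c\<close> has spectral radius below 1, hence bounded powers.\<close>

lemma sym_abs_diag_le_eigenvalue_bound:
  fixes A :: "real mat"
  assumes A: "A \<in> carrier_mat n n" and sym: "transpose_mat A = A"
    and ev: "\<And>e. eigenvalue A e \<Longrightarrow> \<bar>e\<bar> \<le> \<kappa>"
    and i: "i < n"
  shows "\<bar>A $$ (i, i)\<bar> \<le> \<kappa>"
proof (rule ccontr)
  assume "\<not> \<bar>A $$ (i, i)\<bar> \<le> \<kappa>"
  then have gt: "\<kappa> < \<bar>A $$ (i, i)\<bar>" by simp
  obtain l where "eigenvalue (map_mat complex_of_real A) l"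
    using spectrum_non_empty[of "map_mat complex_of_real A" n] A i unfolding spectrum_def by auto
  then have "0 \<le> \<kappa>"
    using sym_eigenvalue_of_real_mat_real[OF A sym] eigenvalue_of_real_mat_iff[OF A] ev
    by (metis Reals_cases abs_ge_zero order_trans)
  define c where "c = (\<bar>A $$ (i, i)\<bar> + \<kappa>) / 2"
  have c: "0 < c" "\<kappa> < c" "c < \<bar>A $$ (i, i)\<bar>"
    using gt \<open>0 \<le> \<kappa>\<close> unfolding c_def by auto
  define A' where "A' = (1 / c) \<cdot>\<^sub>m A"
  have A': "A' \<in> carrier_mat n n" using A unfolding A'_def by simp
  have sym': "transpose_mat A' = A'"
    using A sym_mat_entry[OF A sym] unfolding A'_def by (intro eq_matI) auto
  have "\<bar>e\<bar> < 1" if "eigenvalue A' e" for e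
  proof -
    have "eigenvalue A (e * c)" using eigenvalue_smult_mat[OF A, of "1 / c" e] that c unfolding A'_def by simp
    then have "\<bar>c * e\<bar> \<le> \<kappa>" using ev by (simp add: mult.commute)
    then have "c * \<bar>e\<bar> \<le> \<kappa>" using c by (simp add: abs_mult)
    then have "\<bar>e\<bar> \<le> \<kappa> / c" using c by (simp add: pos_le_divide_eq mult.commute)
    also have "\<kappa> / c < 1" using c by simp
    finally show ?thesis .
  qed
  then obtain C where "\<And>k. norm_bound (map_mat complex_of_real A' ^\<^sub>m k) C"
    using spectral_radius_jnf_norm_bound_less_1_upper_triangular sym_spectral_radius_of_real_mat_less_1[OF A' sym']
      A' i by (metis map_carrier_mat gr_implies_not0 neq0_conv)
  from sym_abs_diag_le_1_of_bounded_powers[OF A' sym' i this]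
  show False using A i c unfolding A'_def by (simp add: abs_mult)
qed

section \<open>Operator norm of block-diagonal matrices\<close>

lemma vnorm_eq_sqrt_sum_squares: "vnorm v = sqrt (\<Sum>i<dim_vec v. (v $ i)\<^sup>2)"
  unfolding vnorm_def scalar_prod_def by (simp add: power2_eq_square atLeast0LessThan)

lemma sum_sym_pattern_le:
  fixes f :: "nat \<Rightarrow> real" and R :: "nat \<Rightarrow> nat \<Rightarrow> bool"
  assumes sym: "\<And>i j. R i j \<longleftrightarrow> R j i" and sparse: "\<And>i. card {j \<in> {..<p}. R i j} \<le> m"
    and f: "\<And>j. 0 \<le> f j"
  shows "(\<Sum>i<p. \<Sum>j\<in>{j \<in> {..<p}. R i j}. f j) \<le> real m * (\<Sum>j<p. f j)"
proof -
  have "(\<Sum>i<p. \<Sum>j\<in>{j \<in> {..<p}. R i j}. f j) = (\<Sum>i<p. \<Sum>j<p. if R i j then f j else 0)"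
    by (intro sum.cong refl sum.inter_filter) simp
  also have "\<dots> = (\<Sum>j<p. \<Sum>i<p. if R j i then f j else 0)"
    using sym by (subst sum.swap) simp
  also have "\<dots> = (\<Sum>j<p. \<Sum>i\<in>{i \<in> {..<p}. R j i}. f j)"
    by (intro sum.cong refl sum.inter_filter[symmetric]) simp
  also have "\<dots> \<le> (\<Sum>j<p. real m * f j)"
    using sparse f by (intro sum_mono) (auto intro!: mult_right_mono)
  finally show ?thesis by (simp add: sum_distrib_left)
qed

lemma sparse_mult_mat_vec_index_square_le:
  fixes D :: "real mat" and R :: "nat \<Rightarrow> nat \<Rightarrow> bool"
  assumes D: "D \<in> carrier_mat p p" and v: "v \<in> carrier_vec p" and i: "i < p"
    and sparse: "card {j \<in> {..<p}. R i j} \<le> m"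
    and off: "\<And>j. j < p \<Longrightarrow> \<not> R i j \<Longrightarrow> D $$ (i, j) = 0"
    and bnd: "\<And>j. j < p \<Longrightarrow> \<bar>D $$ (i, j)\<bar> \<le> \<eta>"
  shows "((D *\<^sub>v v) $ i)\<^sup>2 \<le> real m * \<eta>\<^sup>2 * (\<Sum>j\<in>{j \<in> {..<p}. R i j}. (v $ j)\<^sup>2)"
proof -
  define B where "B = {j \<in> {..<p}. R i j}"
  have "(D *\<^sub>v v) $ i = (\<Sum>j<p. D $$ (i, j) * v $ j)"
    using D v i by (simp add: scalar_prod_def atLeast0LessThan)
  also have "\<dots> = (\<Sum>j\<in>B. D $$ (i, j) * v $ j)"
    using off by (intro sum.mono_neutral_right) (auto simp: B_def)
  finally have "((D *\<^sub>v v) $ i)\<^sup>2 \<le> (\<Sum>j\<in>B. (D $$ (i, j) * v $ j)\<^sup>2) * card B"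
    by (simp add: sum_squared_le_sum_of_squares)
  also have "\<dots> \<le> (\<Sum>j\<in>B. \<eta>\<^sup>2 * (v $ j)\<^sup>2) * real m"
  proof (intro mult_mono sum_mono sum_nonneg)
    fix j assume "j \<in> B"
    then have "(D $$ (i, j))\<^sup>2 \<le> \<eta>\<^sup>2"
      using bnd[of j] by (simp add: B_def abs_le_square_iff[symmetric] abs_le_D2)
    then show "(D $$ (i, j) * v $ j)\<^sup>2 \<le> \<eta>\<^sup>2 * (v $ j)\<^sup>2"
      by (simp add: power_mult_distrib mult_right_mono)
  qed (use sparse in \<open>auto simp: B_def\<close>)
  finally show ?thesis by (simp add: B_def sum_distrib_left mult_ac)
qed

text \<open>A special case of Schur's test.\<close>

lemma op_norm_le_sparse:
  fixes D :: "real mat" and R :: "nat \<Rightarrow> nat \<Rightarrow> bool"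
  assumes D: "D \<in> carrier_mat p p"
    and sym: "\<And>i j. R i j \<longleftrightarrow> R j i"
    and sparse: "\<And>i. card {j \<in> {..<p}. R i j} \<le> m"
    and off: "\<And>i j. i < p \<Longrightarrow> j < p \<Longrightarrow> \<not> R i j \<Longrightarrow> D $$ (i, j) = 0"
    and bnd: "\<And>i j. i < p \<Longrightarrow> j < p \<Longrightarrow> \<bar>D $$ (i, j)\<bar> \<le> \<eta>"
    and eta: "0 \<le> \<eta>"
  shows "op_norm D \<le> real m * \<eta>"
proof -
  have "vnorm (D *\<^sub>v v) \<le> real m * \<eta>" if v: "v \<in> carrier_vec p" "vnorm v \<le> 1" for v
  proof -
    have "(\<Sum>j<p. (v $ j)\<^sup>2) \<le> 1" using v by (simp add: vnorm_eq_sqrt_sum_squares)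
    have "(\<Sum>i<p. ((D *\<^sub>v v) $ i)\<^sup>2) \<le> (\<Sum>i<p. real m * \<eta>\<^sup>2 * (\<Sum>j\<in>{j \<in> {..<p}. R i j}. (v $ j)\<^sup>2))"
      using off bnd by (intro sum_mono sparse_mult_mat_vec_index_square_le[OF D v(1) _ sparse]) auto
    also have "\<dots> \<le> real m * \<eta>\<^sup>2 * (real m * (\<Sum>j<p. (v $ j)\<^sup>2))"
      unfolding sum_distrib_left[symmetric] by (intro mult_left_mono sum_sym_pattern_le[OF sym sparse]) auto
    also have "\<dots> \<le> real m * \<eta>\<^sup>2 * (real m * 1)"
      using \<open>(\<Sum>j<p. (v $ j)\<^sup>2) \<le> 1\<close> by (intro mult_left_mono) auto
    also have "\<dots> = (real m * \<eta>)\<^sup>2"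
      by (simp add: power2_eq_square)
    finally show ?thesis
      using D eta by (simp add: vnorm_eq_sqrt_sum_squares real_le_lsqrt)
  qed
  moreover have "{v \<in> carrier_vec (dim_col D). vnorm v \<le> 1} \<noteq> {}"
    using D by (intro ex_in_conv[THEN iffD1] exI[of _ "0\<^sub>v p"]) (simp add: vnorm_eq_sqrt_sum_squares)
  ultimately show ?thesis
    unfolding op_norm_def using D by (intro cSUP_least) auto
qed

lemma blk_start_mono:
  assumes "t \<le> t'"
  shows "blk_start bs t \<le> blk_start bs t'"
proof -
  have "take t' bs = take t bs @ take (t' - t) (drop t bs)"
    using assms by (metis le_add_diff_inverse take_add)
  then show ?thesis unfolding blk_start_def by simp
qed

lemma blk_start_Suc:
  assumes "t < length bs"
  shows "blk_start bs (Suc t) = blk_start bs t + bs ! t"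
  using assms unfolding blk_start_def by (simp add: take_Suc_conv_app_nth)

lemma blk_index_unique:
  assumes "blk_start bs t \<le> i" "i < blk_start bs (Suc t)"
    and "blk_start bs t' \<le> i" "i < blk_start bs (Suc t')"
  shows "t = t'"
  using assms blk_start_mono[of "Suc t" t' bs] blk_start_mono[of "Suc t'" t bs]
  by (cases t t' rule: linorder_cases) auto

lemma same_block_sym: "same_block bs i j \<longleftrightarrow> same_block bs j i"
  unfolding same_block_def by blast

lemma card_same_block_le:
  assumes "\<And>b. b \<in> set bs \<Longrightarrow> b \<le> m"
  shows "card {j \<in> {..<p}. same_block bs i j} \<le> m"
proof (cases "\<exists>j. same_block bs i j")
  case True
  then obtain t where t: "t < length bs" "blk_start bs t \<le> i" "i < blk_start bs (Suc t)"
    unfolding same_block_def by blast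
  have "{j \<in> {..<p}. same_block bs i j} \<subseteq> {blk_start bs t..<blk_start bs (Suc t)}"
    using blk_index_unique[OF _ _ t(2,3)] unfolding same_block_def by fastforce
  then have "card {j \<in> {..<p}. same_block bs i j} \<le> card {blk_start bs t..<blk_start bs (Suc t)}"
    by (intro card_mono) auto
  also have "\<dots> = bs ! t" using blk_start_Suc[OF t(1)] by simp
  also have "\<dots> \<le> m" using assms t(1) by simp
  finally show ?thesis .
qed simp

lemma card_same_block_pairs_le:
  assumes "\<And>b. b \<in> set bs \<Longrightarrow> b \<le> m"
  shows "card (Sigma {..<q} (\<lambda>i. {j \<in> {..<q}. same_block bs i j})) \<le> q * m"
proof -
  have "card (Sigma {..<q} (\<lambda>i. {j \<in> {..<q}. same_block bs i j}))
      = (\<Sum>i<q. card {j \<in> {..<q}. same_block bs i j})" by simp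
  also have "\<dots> \<le> (\<Sum>i<q. m)" by (intro sum_mono card_same_block_le[OF assms])
  finally show ?thesis by simp
qed

lemma op_norm_block_sample_cov_diff_le:
  fixes X Sig :: "real mat"
  assumes Sig: "Sig \<in> carrier_mat (dim_col X) (dim_col X)" "block_diagonal bs Sig"
    and bs: "\<And>b. b \<in> set bs \<Longrightarrow> b \<le> m"
    and entries: "\<And>i j. i < dim_col X \<Longrightarrow> j < dim_col X \<Longrightarrow> same_block bs i j \<Longrightarrow>
      \<bar>block_sample_cov bs X $$ (i, j) - Sig $$ (i, j)\<bar> \<le> \<eta>"
    and eta: "0 \<le> \<eta>"
  shows "op_norm (block_sample_cov bs X - Sig) \<le> real m * \<eta>"
proof (rule op_norm_le_sparse[OF _ same_block_sym card_same_block_le[OF bs] _ _ eta])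
  show "block_sample_cov bs X - Sig \<in> carrier_mat (dim_col X) (dim_col X)"
    using Sig unfolding block_sample_cov_def by auto
qed (use Sig entries eta in \<open>auto simp: block_sample_cov_def block_diagonal_def\<close>)

lemma abs_power_le_one_plus_abs_power:
  fixes x :: real
  assumes "k \<le> l"
  shows "\<bar>x\<bar> ^ k \<le> 1 + \<bar>x\<bar> ^ l"
proof (cases "\<bar>x\<bar> \<le> 1")
  case True
  then have "\<bar>x\<bar> ^ k \<le> 1" by (simp add: power_le_one)
  then show ?thesis by (simp add: add_increasing2)
next
  case False
  then have "\<bar>x\<bar> ^ k \<le> \<bar>x\<bar> ^ l" using assms by (intro power_increasing) auto
  then show ?thesis by simp
qed

lemma power4_diff_le: "((a::real) - c) ^ 4 \<le> 8 * (a ^ 4 + c ^ 4)"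
proof -
  have "(a - c)\<^sup>2 \<le> 2 * (a\<^sup>2 + c\<^sup>2)"
    using sum_squares_bound[of a "-c"] by (simp add: power2_eq_square algebra_simps)
  then have "((a - c)\<^sup>2)\<^sup>2 \<le> (2 * (a\<^sup>2 + c\<^sup>2))\<^sup>2" by (intro power_mono) auto
  also have "\<dots> = 4 * (a\<^sup>2 + c\<^sup>2)\<^sup>2" by (simp add: power2_eq_square algebra_simps)
  also have "(a\<^sup>2 + c\<^sup>2)\<^sup>2 \<le> 2 * (a ^ 4 + c ^ 4)"
    using sum_squares_bound[of "a\<^sup>2" "c\<^sup>2"] by (simp add: power2_eq_square algebra_simps eval_nat_numeral)
  finally show ?thesis by (simp add: power_mult[symmetric])
qed

lemma power4_mult_le: "((x::real) * y) ^ 4 \<le> (x ^ 8 + y ^ 8) / 2"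
proof -
  have "0 \<le> (x ^ 4 - y ^ 4)\<^sup>2" by simp
  then have "2 * (x ^ 4 * y ^ 4) \<le> (x ^ 4)\<^sup>2 + (y ^ 4)\<^sup>2" by (simp add: power2_eq_square algebra_simps)
  then show ?thesis by (simp add: power_mult_distrib power_mult[symmetric])
qed

lemma exp_le_add_exp_square: "exp (x::real) \<le> x + exp (x\<^sup>2)"
proof (cases "x \<ge> 1")
  case True
  then have "x \<le> x\<^sup>2" by (simp add: power2_eq_square)
  then show ?thesis using True by (smt (verit) exp_le_cancel_iff)
next
  case False
  have "exp x \<le> 1 + x + x\<^sup>2"
  proof (cases "x \<ge> 0")
    case True
    then show ?thesis using exp_bound[OF True] False by simp
  next
    case neg: False
    have "exp x * (1 - x) \<le> exp x * exp (- x)"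
      using exp_ge_add_one_self[of "- x"] by (intro mult_left_mono) auto
    also have "\<dots> = 1" by (simp add: exp_minus)
    also have "1 \<le> (1 + x + x\<^sup>2) * (1 - x)"
      using neg mult_nonneg_nonpos[of "x * x" x] by (simp add: algebra_simps power2_eq_square)
    finally show ?thesis using neg by (simp add: mult_le_cancel_right)
  qed
  also have "\<dots> \<le> x + exp (x\<^sup>2)" using exp_ge_add_one_self[of "x\<^sup>2"] by simp
  finally show ?thesis .
qed

lemma exp_mult_le_AM_GM_bound:
  fixes t z K :: real
  assumes K: "0 < K"
  shows "exp (t * z) \<le> exp (t\<^sup>2 * K\<^sup>2 / 2) * ((1 + exp (z\<^sup>2 / K\<^sup>2)) / 2)"
proof -
  have "0 \<le> (t * K - z / K)\<^sup>2" by simp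
  also have "(t * K - z / K)\<^sup>2 = t\<^sup>2 * K\<^sup>2 - 2 * (t * z) + z\<^sup>2 / K\<^sup>2"
    using K by (simp add: power2_eq_square field_simps)
  finally have "exp (t * z) \<le> exp (t\<^sup>2 * K\<^sup>2 / 2) * exp (z\<^sup>2 / K\<^sup>2 / 2)"
    by (simp flip: exp_add)
  also have "exp (z\<^sup>2 / K\<^sup>2 / 2) \<le> (1 + exp (z\<^sup>2 / K\<^sup>2)) / 2"
    using sum_squares_bound[of 1 "exp (z\<^sup>2 / K\<^sup>2 / 2)"] by (simp add: power2_eq_square flip: exp_add)
  finally show ?thesis by simp
qed

lemma exp_mult_le_convex_bound:
  fixes t z K :: real
  assumes K: "0 < K" and small: "t\<^sup>2 * K\<^sup>2 \<le> 1"
  shows "exp (t * z) \<le> t * z + (1 - t\<^sup>2 * K\<^sup>2) + t\<^sup>2 * K\<^sup>2 * exp (z\<^sup>2 / K\<^sup>2)"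
proof -
  have "exp (t * z) \<le> t * z + exp ((1 - t\<^sup>2 * K\<^sup>2) *\<^sub>R 0 + (t\<^sup>2 * K\<^sup>2) *\<^sub>R (z\<^sup>2 / K\<^sup>2))"
    using exp_le_add_exp_square[of "t * z"] K by (simp add: power2_eq_square field_simps)
  also have "exp ((1 - t\<^sup>2 * K\<^sup>2) *\<^sub>R 0 + (t\<^sup>2 * K\<^sup>2) *\<^sub>R (z\<^sup>2 / K\<^sup>2))
      \<le> (1 - t\<^sup>2 * K\<^sup>2) * exp 0 + t\<^sup>2 * K\<^sup>2 * exp (z\<^sup>2 / K\<^sup>2)"
    using small by (intro convex_onD[OF exp_convex]) auto
  finally show ?thesis by simp
qed

lemma power_div_fact_le_exp:
  assumes "(y::real) \<ge> 0"
  shows "y ^ k / fact k \<le> exp y"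
proof -
  have "(\<Sum>n\<in>{k}. y ^ n / fact n) \<le> (\<Sum>n. y ^ n / fact n)"
    using assms summable_exp_generic[of y]
    by (intro sum_le_suminf) (auto simp: divide_inverse ac_simps)
  also have "(\<Sum>n. y ^ n / fact n) = exp y"
    by (simp add: exp_def divide_inverse ac_simps)
  finally show ?thesis by simp
qed

lemma abs_power_le_exp_add_exp:
  fixes x u :: real
  assumes u: "0 < u"
  shows "\<bar>x\<bar> ^ k \<le> fact k / u ^ k * (exp (u * x) + exp (- (u * x)))"
proof -
  have "\<bar>u * x\<bar> ^ k / fact k \<le> exp \<bar>u * x\<bar>" by (rule power_div_fact_le_exp) simp
  also have "exp \<bar>u * x\<bar> \<le> exp (u * x) + exp (- (u * x))"
    by (cases "u * x \<ge> 0") auto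
  finally have "u ^ k * \<bar>x\<bar> ^ k \<le> fact k * (exp (u * x) + exp (- (u * x)))"
    using u by (simp add: divide_le_eq abs_mult power_mult_distrib mult.commute)
  then show ?thesis using u by (simp add: field_simps)
qed

section \<open>Moments of sums of independent random variables\<close>

lemma integral_le_of_nn_integral_le:
  fixes f :: "'a \<Rightarrow> real"
  assumes [measurable]: "f \<in> borel_measurable M" and nonneg: "\<And>x. 0 \<le> f x"
    and le: "(\<integral>\<^sup>+ x. ennreal (f x) \<partial>M) \<le> ennreal B" and B: "0 \<le> B"
  shows "integrable M f" and "integral\<^sup>L M f \<le> B"
proof -
  show int: "integrable M f"
  proof (rule integrableI_bounded)
    show "(\<integral>\<^sup>+ x. ennreal (norm (f x)) \<partial>M) < \<infinity>"
      using le nonneg by (simp add: le_less_trans)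
  qed simp
  have "ennreal (integral\<^sup>L M f) = (\<integral>\<^sup>+ x. ennreal (f x) \<partial>M)"
    using int nonneg by (intro nn_integral_eq_integral[symmetric]) auto
  with le B show "integral\<^sup>L M f \<le> B" by (metis ennreal_le_iff)
qed

lemma integrable_mult_of_square_integrable:
  fixes f g :: "'a \<Rightarrow> real"
  assumes "f \<in> borel_measurable M" "g \<in> borel_measurable M"
    and "integrable M (\<lambda>x. (f x)\<^sup>2)" "integrable M (\<lambda>x. (g x)\<^sup>2)"
  shows "integrable M (\<lambda>x. f x * g x)"
proof (rule Bochner_Integration.integrable_bound)
  show "integrable M (\<lambda>x. (f x)\<^sup>2 + (g x)\<^sup>2)" using assms by simp
  have "2 * \<bar>f x * g x\<bar> \<le> (f x)\<^sup>2 + (g x)\<^sup>2" for x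
    using sum_squares_bound[of "\<bar>f x\<bar>" "\<bar>g x\<bar>"] by (simp add: abs_mult power2_eq_square)
  then have "\<bar>f x * g x\<bar> \<le> (f x)\<^sup>2 + (g x)\<^sup>2" for x
    using abs_ge_zero[of "f x * g x"] by (smt (verit))
  then show "AE x in M. norm (f x * g x) \<le> norm ((f x)\<^sup>2 + (g x)\<^sup>2)" by simp
qed (use assms in simp)

context prob_space
begin

lemma integrable_power_le:
  fixes f :: "'a \<Rightarrow> real"
  assumes [measurable]: "f \<in> borel_measurable M"
    and "integrable M (\<lambda>x. f x ^ l)" and "k \<le> l"
  shows "integrable M (\<lambda>x. f x ^ k)"
proof (rule Bochner_Integration.integrable_bound)
  show "integrable M (\<lambda>x. 1 + \<bar>f x ^ l\<bar>)" using assms(2) by simp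
  show "AE x in M. norm (f x ^ k) \<le> norm (1 + \<bar>f x ^ l\<bar>)"
    using abs_power_le_one_plus_abs_power[OF assms(3)] by (simp add: power_abs)
qed simp

lemma expectation_square_le_one_plus_fourth:
  fixes f :: "'a \<Rightarrow> real"
  assumes [measurable]: "f \<in> borel_measurable M" and i4: "integrable M (\<lambda>x. f x ^ 4)"
  shows "expectation (\<lambda>x. f x ^ 2) \<le> 1 + expectation (\<lambda>x. f x ^ 4)"
proof -
  have "f x ^ 2 \<le> 1 + f x ^ 4" for x
    using abs_power_le_one_plus_abs_power[of 2 4 "f x"] by (simp add: power_even_abs)
  then have "expectation (\<lambda>x. f x ^ 2) \<le> expectation (\<lambda>x. 1 + f x ^ 4)"
    using i4 by (intro integral_mono integrable_power_le[OF _ i4]) simp_all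
  also have "\<dots> = 1 + expectation (\<lambda>x. f x ^ 4)"
    using i4 prob_space by (simp add: Bochner_Integration.integral_add)
  finally show ?thesis .
qed

lemma indep_var_power_mult:
  fixes X Y :: "'a \<Rightarrow> real"
  assumes ind: "indep_var borel X borel Y"
    and iX: "integrable M (\<lambda>x. X x ^ a)" and iY: "integrable M (\<lambda>x. Y x ^ b)"
  shows "integrable M (\<lambda>x. X x ^ a * Y x ^ b)"
    and "expectation (\<lambda>x. X x ^ a * Y x ^ b) = expectation (\<lambda>x. X x ^ a) * expectation (\<lambda>x. Y x ^ b)"
proof -
  have "indep_var borel ((\<lambda>t. t ^ a) \<circ> X) borel ((\<lambda>t. t ^ b) \<circ> Y)"
    by (rule indep_var_compose[OF ind]) auto
  then have ind': "indep_var borel (\<lambda>x. X x ^ a) borel (\<lambda>x. Y x ^ b)" by (simp add: comp_def)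
  show "integrable M (\<lambda>x. X x ^ a * Y x ^ b)"
    by (rule indep_var_integrable[OF ind' iX iY])
  show "expectation (\<lambda>x. X x ^ a * Y x ^ b) = expectation (\<lambda>x. X x ^ a) * expectation (\<lambda>x. Y x ^ b)"
    by (rule indep_var_lebesgue_integral[OF ind' iX iY])
qed

lemma indep_var_moments_add:
  fixes T V :: "'a \<Rightarrow> real"
  assumes ind: "indep_var borel T borel V"
    and iT: "integrable M (\<lambda>x. T x ^ 4)" and iV: "integrable M (\<lambda>x. V x ^ 4)"
    and ET: "expectation T = 0" and EV: "expectation V = 0"
  shows "integrable M (\<lambda>x. (T x + V x) ^ 4)"
    and "expectation (\<lambda>x. (T x + V x) ^ 4) = expectation (\<lambda>x. T x ^ 4)
      + 6 * expectation (\<lambda>x. T x ^ 2) * expectation (\<lambda>x. V x ^ 2) + expectation (\<lambda>x. V x ^ 4)"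
    and "expectation (\<lambda>x. (T x + V x) ^ 2) = expectation (\<lambda>x. T x ^ 2) + expectation (\<lambda>x. V x ^ 2)"
    and "expectation (\<lambda>x. T x + V x) = 0"
proof -
  have [measurable]: "T \<in> borel_measurable M" "V \<in> borel_measurable M"
    using indep_var_rv1[OF ind] indep_var_rv2[OF ind] by auto
  have P: "integrable M (\<lambda>x. T x ^ a * V x ^ b)"
    "expectation (\<lambda>x. T x ^ a * V x ^ b) = expectation (\<lambda>x. T x ^ a) * expectation (\<lambda>x. V x ^ b)"
    if "a \<le> 4" "b \<le> 4" for a b
    using indep_var_power_mult[OF ind integrable_power_le[OF _ iT that(1)] integrable_power_le[OF _ iV that(2)]]
    by auto
  note I = P(1)[of 4 0] P(1)[of 3 1] P(1)[of 2 2] P(1)[of 1 3] P(1)[of 0 4] P(1)[of 1 1]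
    P(1)[of 2 0] P(1)[of 0 2] P(1)[of 1 0] P(1)[of 0 1]
  note E = P(2)[of 3 1] P(2)[of 2 2] P(2)[of 1 3] P(2)[of 1 1]
  have e4: "(T x + V x) ^ 4 = T x ^ 4 + 4 * (T x ^ 3 * V x) + 6 * (T x ^ 2 * V x ^ 2)
      + 4 * (T x * V x ^ 3) + V x ^ 4" for x
    by (simp add: power2_eq_square power3_eq_cube power4_eq_xxxx algebra_simps eval_nat_numeral)
  have e2: "(T x + V x) ^ 2 = T x ^ 2 + 2 * (T x * V x) + V x ^ 2" for x
    by (simp add: power2_eq_square algebra_simps)
  show "integrable M (\<lambda>x. (T x + V x) ^ 4)"
    unfolding e4 using I by simp
  show "expectation (\<lambda>x. (T x + V x) ^ 4) = expectation (\<lambda>x. T x ^ 4)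
      + 6 * expectation (\<lambda>x. T x ^ 2) * expectation (\<lambda>x. V x ^ 2) + expectation (\<lambda>x. V x ^ 4)"
    unfolding e4 using I E ET EV by simp
  show "expectation (\<lambda>x. (T x + V x) ^ 2) = expectation (\<lambda>x. T x ^ 2) + expectation (\<lambda>x. V x ^ 2)"
    unfolding e2 using I E ET EV by simp
  show "expectation (\<lambda>x. T x + V x) = 0"
    using I ET EV by simp
qed

text \<open>The fourth moment of a sum of \<open>n\<close> independent centred variables is \<open>O(n\<^sup>2)\<close>, since only
  the terms \<open>E W\<^sub>i\<^sup>4\<close> and \<open>E W\<^sub>i\<^sup>2 W\<^sub>j\<^sup>2\<close> survive.\<close>

lemma indep_vars_sum_fourth_moment_le:
  fixes W :: "'i \<Rightarrow> 'a \<Rightarrow> real"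
  assumes fin: "finite I" and ind: "indep_vars (\<lambda>_. borel) W I"
    and i4: "\<And>i. i \<in> I \<Longrightarrow> integrable M (\<lambda>x. W i x ^ 4)"
    and m1: "\<And>i. i \<in> I \<Longrightarrow> expectation (W i) = 0"
    and m2: "\<And>i. i \<in> I \<Longrightarrow> expectation (\<lambda>x. W i x ^ 2) \<le> B2"
    and m4: "\<And>i. i \<in> I \<Longrightarrow> expectation (\<lambda>x. W i x ^ 4) \<le> B4"
  shows "integrable M (\<lambda>x. (\<Sum>i\<in>I. W i x) ^ 4)"
    and "expectation (\<lambda>x. (\<Sum>i\<in>I. W i x) ^ 4) \<le> real (card I) * B4 + 3 * (real (card I))\<^sup>2 * B2\<^sup>2"
proof -
  have "integrable M (\<lambda>x. (\<Sum>i\<in>I. W i x) ^ 4) \<and>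
    expectation (\<lambda>x. (\<Sum>i\<in>I. W i x) ^ 4) \<le> real (card I) * B4 + 3 * (real (card I))\<^sup>2 * B2\<^sup>2 \<and>
    expectation (\<lambda>x. \<Sum>i\<in>I. W i x) = 0 \<and>
    expectation (\<lambda>x. (\<Sum>i\<in>I. W i x) ^ 2) \<le> real (card I) * B2"
    using fin ind i4 m1 m2 m4
  proof (induction I rule: finite_induct)
    case (insert a F)
    define T where "T = (\<lambda>x. \<Sum>i\<in>F. W i x)"
    have IH: "integrable M (\<lambda>x. T x ^ 4)"
      "expectation (\<lambda>x. T x ^ 4) \<le> real (card F) * B4 + 3 * (real (card F))\<^sup>2 * B2\<^sup>2"
      "expectation T = 0" "expectation (\<lambda>x. T x ^ 2) \<le> real (card F) * B2"
      using insert.IH[OF indep_vars_subset[OF insert.prems(1)]] insert.prems(2-5) unfolding T_def by auto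
    have a: "integrable M (\<lambda>x. W a x ^ 4)" "expectation (W a) = 0"
      "expectation (\<lambda>x. W a x ^ 2) \<le> B2" "expectation (\<lambda>x. W a x ^ 4) \<le> B4"
      using insert.prems(2-5) by auto
    have ind: "indep_var borel (W a) borel T"
      using indep_vars_sum[OF insert.hyps insert.prems(1)] unfolding T_def .
    note add = indep_var_moments_add[OF ind a(1) IH(1) a(2) IH(3)]
    have "0 \<le> B2" "0 \<le> expectation (\<lambda>x. T x ^ 2)"
      using a(3) order_trans[OF integral_nonneg_AE a(3)] by (auto intro: integral_nonneg_AE)
    then have "expectation (\<lambda>x. (W a x + T x) ^ 4)
        \<le> B4 + 6 * (B2 * (real (card F) * B2)) + (real (card F) * B4 + 3 * (real (card F))\<^sup>2 * B2\<^sup>2)"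
      using add(2) IH(2) a(4) mult_mono[OF a(3) IH(4)] by simp
    also have "\<dots> = real (card (insert a F)) * B4 + 3 * (real (card (insert a F)))\<^sup>2 * B2\<^sup>2
        - 3 * B2\<^sup>2"
      using insert.hyps by (simp add: power2_eq_square algebra_simps)
    finally have "expectation (\<lambda>x. (W a x + T x) ^ 4)
        \<le> real (card (insert a F)) * B4 + 3 * (real (card (insert a F)))\<^sup>2 * B2\<^sup>2"
      using zero_le_power2[of B2] by linarith
    moreover have "(\<Sum>i\<in>insert a F. W i x) = W a x + T x" for x
      using insert.hyps unfolding T_def by simp
    ultimately show ?case
      using add(1,3,4) IH(4) a(3) insert.hyps by (simp add: distrib_right)
  qed simp
  then show "integrable M (\<lambda>x. (\<Sum>i\<in>I. W i x) ^ 4)"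
    and "expectation (\<lambda>x. (\<Sum>i\<in>I. W i x) ^ 4) \<le> real (card I) * B4 + 3 * (real (card I))\<^sup>2 * B2\<^sup>2"
    by auto
qed

lemma prob_abs_ge_le_fourth_moment:
  fixes T :: "'a \<Rightarrow> real"
  assumes "integrable M (\<lambda>x. T x ^ 4)" and "0 < c"
  shows "prob {x \<in> space M. c \<le> \<bar>T x\<bar>} \<le> expectation (\<lambda>x. T x ^ 4) / c ^ 4"
proof -
  have "c \<le> \<bar>t\<bar> \<longleftrightarrow> c ^ 4 \<le> t ^ 4" for t :: real
    using power_mono_iff[of c "\<bar>t\<bar>" 4] assms(2) by (simp add: power_even_abs)
  then have "{x \<in> space M. c \<le> \<bar>T x\<bar>} = {x \<in> space M. c ^ 4 \<le> T x ^ 4}" by simp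
  also have "prob \<dots> \<le> expectation (\<lambda>x. T x ^ 4) / c ^ 4"
    using assms by (intro integral_Markov_inequality_measure[of _ _ "space M"]) auto
  finally show ?thesis .
qed

lemma indep_sets_reindex:
  assumes inj: "inj_on f I" and ind: "indep_sets F (f ` I)"
  shows "indep_sets (\<lambda>i. F (f i)) I"
  unfolding indep_sets_def
proof (intro conjI ballI allI impI)
  show "F (f i) \<subseteq> events" if "i \<in> I" for i
    using ind that unfolding indep_sets_def by auto
  fix J A assume J: "J \<subseteq> I" "J \<noteq> {}" "finite J" and A: "A \<in> (\<Pi> j\<in>J. F (f j))"
  define A' where "A' = A \<circ> the_inv_into J f"
  have injJ: "inj_on f J" using inj J(1) by (rule inj_on_subset)
  have A'f: "A' (f j) = A j" if "j \<in> J" for j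
    unfolding A'_def using the_inv_into_f_f[OF injJ that] by simp
  have "A' \<in> (\<Pi> j\<in>f ` J. F j)" using A A'f by auto
  then have "prob (\<Inter>j\<in>f ` J. A' j) = (\<Prod>j\<in>f ` J. prob (A' j))"
    using ind J unfolding indep_sets_def by (metis finite_imageI image_is_empty image_mono)
  then show "prob (\<Inter>j\<in>J. A j) = (\<Prod>j\<in>J. prob (A j))"
    using A'f by (simp add: prod.reindex[OF injJ])
qed

lemma indep_vars_reindex:
  assumes inj: "inj_on f I" and ind: "indep_vars M' X (f ` I)"
  shows "indep_vars (\<lambda>i. M' (f i)) (\<lambda>i. X (f i)) I"
  using ind indep_sets_reindex[OF inj, of "\<lambda>i. {X i -` A \<inter> space M |A. A \<in> sets (M' i)}"]
  unfolding indep_vars_def2 by auto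

lemma expectation_lin_comb_mult:
  fixes z :: "'i \<Rightarrow> 'a \<Rightarrow> real" and a b :: "'i \<Rightarrow> real"
  assumes ind: "indep_vars (\<lambda>_. borel) z I" and fin: "finite I"
    and iz: "\<And>k. k \<in> I \<Longrightarrow> integrable M (z k)"
    and Ez: "\<And>k. k \<in> I \<Longrightarrow> expectation (z k) = 0"
    and iz2: "\<And>k. k \<in> I \<Longrightarrow> integrable M (\<lambda>x. (z k x)\<^sup>2)"
    and Ez2: "\<And>k. k \<in> I \<Longrightarrow> expectation (\<lambda>x. (z k x)\<^sup>2) = 1"
  shows "integrable M (\<lambda>x. (\<Sum>k\<in>I. a k * z k x) * (\<Sum>k\<in>I. b k * z k x))"
    and "expectation (\<lambda>x. (\<Sum>k\<in>I. a k * z k x) * (\<Sum>k\<in>I. b k * z k x)) = (\<Sum>k\<in>I. a k * b k)"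
proof -
  have ip: "integrable M (\<lambda>x. z k x * z k' x)" if "k \<in> I" "k' \<in> I" for k k'
    using iz iz2 that by (intro integrable_mult_of_square_integrable) auto
  have Ep: "expectation (\<lambda>x. z k x * z k' x) = (if k = k' then 1 else 0)" if "k \<in> I" "k' \<in> I" for k k'
  proof (cases "k = k'")
    case False
    have "indep_vars (\<lambda>_. borel) z {k, k'}"
      using that by (intro indep_vars_subset[OF ind]) auto
    then have "expectation (\<lambda>x. \<Prod>j\<in>{k, k'}. z j x) = (\<Prod>j\<in>{k, k'}. expectation (z j))"
      using iz that by (intro indep_vars_lebesgue_integral) auto
    then show ?thesis using False Ez that by simp
  qed (use Ez2 that in \<open>simp add: power2_eq_square\<close>)
  have prod: "(\<Sum>k\<in>I. a k * z k x) * (\<Sum>k\<in>I. b k * z k x)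
      = (\<Sum>k\<in>I. \<Sum>k'\<in>I. a k * b k' * (z k x * z k' x))" for x
    by (simp add: sum_product mult_ac)
  show "integrable M (\<lambda>x. (\<Sum>k\<in>I. a k * z k x) * (\<Sum>k\<in>I. b k * z k x))"
    unfolding prod using ip by simp
  have "expectation (\<lambda>x. (\<Sum>k\<in>I. a k * z k x) * (\<Sum>k\<in>I. b k * z k x))
      = (\<Sum>k\<in>I. \<Sum>k'\<in>I. a k * b k' * expectation (\<lambda>x. z k x * z k' x))"
    unfolding prod using ip by (simp add: Bochner_Integration.integral_sum)
  also have "\<dots> = (\<Sum>k\<in>I. \<Sum>k'\<in>I. a k * b k' * (if k = k' then 1 else 0))"
    using Ep by (intro sum.cong refl) auto
  also have "\<dots> = (\<Sum>k\<in>I. a k * b k)"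
    using fin by (simp add: if_distrib cong: if_cong)
  finally show "expectation (\<lambda>x. (\<Sum>k\<in>I. a k * z k x) * (\<Sum>k\<in>I. b k * z k x)) = (\<Sum>k\<in>I. a k * b k)" .
qed

end

section \<open>Sub-Gaussian linear combinations\<close>

lemma nn_integral_even_power_le_exp:
  fixes X :: "'a \<Rightarrow> real"
  assumes [measurable]: "X \<in> borel_measurable M" and u: "0 < u"
  shows "(\<integral>\<^sup>+ x. ennreal (X x ^ (2 * r)) \<partial>M) \<le> ennreal (fact (2 * r) / u ^ (2 * r)) *
    ((\<integral>\<^sup>+ x. ennreal (exp (u * X x)) \<partial>M) + (\<integral>\<^sup>+ x. ennreal (exp ((- u) * X x)) \<partial>M))"
proof -
  define C where "C = fact (2 * r) / u ^ (2 * r)"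
  have "0 \<le> C" unfolding C_def using u by simp
  have "(\<integral>\<^sup>+ x. ennreal (X x ^ (2 * r)) \<partial>M)
      \<le> (\<integral>\<^sup>+ x. ennreal (C * (exp (u * X x) + exp ((- u) * X x))) \<partial>M)"
    using abs_power_le_exp_add_exp[OF u, of "X _" "2 * r"] unfolding C_def
    by (intro nn_integral_mono ennreal_leI) (simp add: power_even_abs)
  also have "\<dots> = (\<integral>\<^sup>+ x. ennreal C * (ennreal (exp (u * X x)) + ennreal (exp ((- u) * X x))) \<partial>M)"
    using \<open>0 \<le> C\<close> by (intro nn_integral_cong) (simp add: ennreal_mult)
  also have "\<dots> = ennreal C * (\<integral>\<^sup>+ x. ennreal (exp (u * X x)) + ennreal (exp ((- u) * X x)) \<partial>M)"
    by (rule nn_integral_cmult) simp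
  also have "\<dots> = ennreal C * ((\<integral>\<^sup>+ x. ennreal (exp (u * X x)) \<partial>M) + (\<integral>\<^sup>+ x. ennreal (exp ((- u) * X x)) \<partial>M))"
    by (subst nn_integral_add) auto
  finally show ?thesis unfolding C_def .
qed

context prob_space
begin

lemma subgaussian_exp_square_moment:
  fixes Z :: "'a \<Rightarrow> real"
  assumes [measurable]: "Z \<in> borel_measurable M" and "subgaussian_norm_le M Z K"
  shows "integrable M (\<lambda>x. exp ((Z x)\<^sup>2 / K\<^sup>2))" and "expectation (\<lambda>x. exp ((Z x)\<^sup>2 / K\<^sup>2)) \<le> 2"
  using integral_le_of_nn_integral_le[of "\<lambda>x. exp ((Z x)\<^sup>2 / K\<^sup>2)" M 2] assms(2)
  unfolding subgaussian_norm_le_def by simp_all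

lemma subgaussian_mgf_le:
  fixes Z :: "'a \<Rightarrow> real"
  assumes iZ: "integrable M Z" and EZ: "expectation Z = 0"
    and K: "0 < K" and sg: "subgaussian_norm_le M Z K"
  shows "integrable M (\<lambda>x. exp (t * Z x))" and "expectation (\<lambda>x. exp (t * Z x)) \<le> exp (t\<^sup>2 * K\<^sup>2)"
proof -
  have [measurable]: "Z \<in> borel_measurable M" using iZ by auto
  define Y where "Y x = exp ((Z x)\<^sup>2 / K\<^sup>2)" for x
  note iY = subgaussian_exp_square_moment(1)[OF _ sg, folded Y_def]
  note EY = subgaussian_exp_square_moment(2)[OF _ sg, folded Y_def]
  define a where "a = t\<^sup>2 * K\<^sup>2"
  have "0 \<le> a" unfolding a_def by simp
  have ib: "integrable M (\<lambda>x. exp (a / 2) * ((1 + Y x) / 2))" using iY by simp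
  note bound = exp_mult_le_AM_GM_bound[OF K, of t "Z _", folded a_def Y_def]
  show iE: "integrable M (\<lambda>x. exp (t * Z x))"
    using bound by (intro Bochner_Integration.integrable_bound[OF ib]) (auto intro!: AE_I2 simp: Y_def)
  show "expectation (\<lambda>x. exp (t * Z x)) \<le> exp (t\<^sup>2 * K\<^sup>2)"
  proof (cases "a \<le> 1")
    case True
    note pt = exp_mult_le_convex_bound[OF K True[unfolded a_def], of "Z _", folded a_def Y_def]
    have "expectation (\<lambda>x. exp (t * Z x)) \<le> expectation (\<lambda>x. t * Z x + (1 - a) + a * Y x)"
      using iZ iY by (intro integral_mono[OF iE _ pt]) simp
    also have "\<dots> = 1 + a * (expectation Y - 1)"
      using iZ iY EZ prob_space by (simp add: algebra_simps)
    also have "\<dots> \<le> 1 + a"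
      using EY \<open>0 \<le> a\<close> True by (simp add: mult_left_le)
    also have "\<dots> \<le> exp a" by (rule exp_ge_add_one_self)
    finally show ?thesis unfolding a_def .
  next
    case False
    have "expectation (\<lambda>x. exp (t * Z x)) \<le> expectation (\<lambda>x. exp (a / 2) * ((1 + Y x) / 2))"
      by (rule integral_mono[OF iE ib bound])
    also have "\<dots> = exp (a / 2) * ((1 + expectation Y) / 2)"
      using iY prob_space by simp
    also have "\<dots> \<le> exp (a / 2) * exp (1 / 2)"
      using EY exp_ge_add_one_self[of "1 / 2"] by (intro mult_left_mono) auto
    also have "\<dots> \<le> exp a"
      using False by (simp flip: exp_add)
    finally show ?thesis unfolding a_def .
  qed
qed

lemma subgaussian_lin_comb_mgf_le:
  fixes z :: "'i \<Rightarrow> 'a \<Rightarrow> real"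
  assumes ind: "indep_vars (\<lambda>_. borel) z I" and fin: "finite I"
    and iz: "\<And>k. k \<in> I \<Longrightarrow> integrable M (z k)"
    and Ez: "\<And>k. k \<in> I \<Longrightarrow> expectation (z k) = 0"
    and sg: "\<And>k. k \<in> I \<Longrightarrow> subgaussian_norm_le M (z k) K" and K: "0 < K"
  shows "(\<integral>\<^sup>+ x. ennreal (exp (t * (\<Sum>k\<in>I. c k * z k x))) \<partial>M)
    \<le> ennreal (exp (t\<^sup>2 * K\<^sup>2 * (\<Sum>k\<in>I. (c k)\<^sup>2)))"
proof -
  have ind': "indep_vars (\<lambda>_. borel) (\<lambda>k x. ennreal (exp (t * c k * z k x))) I"
    by (rule indep_vars_compose2[OF ind]) auto
  have "(\<integral>\<^sup>+ x. ennreal (exp (t * (\<Sum>k\<in>I. c k * z k x))) \<partial>M)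
      = (\<integral>\<^sup>+ x. (\<Prod>k\<in>I. ennreal (exp (t * c k * z k x))) \<partial>M)"
    using fin by (simp add: sum_distrib_left exp_sum mult.assoc prod_ennreal)
  also have "\<dots> = (\<Prod>k\<in>I. \<integral>\<^sup>+ x. ennreal (exp (t * c k * z k x)) \<partial>M)"
    by (rule indep_vars_nn_integral[OF fin ind']) simp
  also have "\<dots> \<le> (\<Prod>k\<in>I. ennreal (exp ((t * c k)\<^sup>2 * K\<^sup>2)))"
  proof (rule prod_mono_ennreal)
    fix k assume k: "k \<in> I"
    note mgf = subgaussian_mgf_le[OF iz[OF k] Ez[OF k] K sg[OF k], of "t * c k"]
    have "(\<integral>\<^sup>+ x. ennreal (exp (t * c k * z k x)) \<partial>M) = ennreal (expectation (\<lambda>x. exp (t * c k * z k x)))"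
      using mgf(1) by (intro nn_integral_eq_integral) auto
    then show "(\<integral>\<^sup>+ x. ennreal (exp (t * c k * z k x)) \<partial>M) \<le> ennreal (exp ((t * c k)\<^sup>2 * K\<^sup>2))"
      using mgf(2) by simp
  qed
  also have "\<dots> = ennreal (exp (t\<^sup>2 * K\<^sup>2 * (\<Sum>k\<in>I. (c k)\<^sup>2)))"
    using fin by (simp add: prod_ennreal exp_sum sum_distrib_left power_mult_distrib mult_ac)
  finally show ?thesis .
qed

text \<open>The choice \<open>u = 1/(K\<surd>\<kappa>)\<close> makes both exponential moments of the combination at most \<open>e\<close>.\<close>

lemma subgaussian_lin_comb_even_moment_le:
  fixes z :: "'i \<Rightarrow> 'a \<Rightarrow> real"
  assumes ind: "indep_vars (\<lambda>_. borel) z I" and fin: "finite I"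
    and iz: "\<And>k. k \<in> I \<Longrightarrow> integrable M (z k)"
    and Ez: "\<And>k. k \<in> I \<Longrightarrow> expectation (z k) = 0"
    and sg: "\<And>k. k \<in> I \<Longrightarrow> subgaussian_norm_le M (z k) K" and K: "0 < K"
    and \<kappa>: "0 < \<kappa>" and c: "(\<Sum>k\<in>I. (c k)\<^sup>2) \<le> \<kappa>"
  shows "integrable M (\<lambda>x. (\<Sum>k\<in>I. c k * z k x) ^ (2 * r))"
    and "expectation (\<lambda>x. (\<Sum>k\<in>I. c k * z k x) ^ (2 * r)) \<le> 2 * exp 1 * fact (2 * r) * (K\<^sup>2 * \<kappa>) ^ r"
proof -
  define X where "X x = (\<Sum>k\<in>I. c k * z k x)" for x
  have [measurable]: "X \<in> borel_measurable M"
    unfolding X_def using iz by (intro borel_measurable_sum borel_measurable_times) auto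
  define u where "u = 1 / (K * sqrt \<kappa>)"
  have u: "0 < u" unfolding u_def using K \<kappa> by simp
  have u2: "u\<^sup>2 = 1 / (K\<^sup>2 * \<kappa>)" unfolding u_def using \<kappa> by (simp add: power_divide power_mult_distrib)
  have C: "fact (2 * r) / u ^ (2 * r) = fact (2 * r) * (K\<^sup>2 * \<kappa>) ^ r"
    unfolding power_mult u2 by (simp add: power_one_over)
  have mgf: "(\<integral>\<^sup>+ x. ennreal (exp (t * X x)) \<partial>M) \<le> ennreal (exp 1)" if "t\<^sup>2 = u\<^sup>2" for t
  proof -
    have "t\<^sup>2 * K\<^sup>2 = 1 / \<kappa>" using that u2 K by simp
    then have "t\<^sup>2 * K\<^sup>2 * (\<Sum>k\<in>I. (c k)\<^sup>2) \<le> 1" using c \<kappa> by simp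
    then show ?thesis
      using subgaussian_lin_comb_mgf_le[OF ind fin iz Ez sg K, of t c] unfolding X_def
      by (simp add: order_trans)
  qed
  have "(\<integral>\<^sup>+ x. ennreal (X x ^ (2 * r)) \<partial>M) \<le> ennreal (fact (2 * r) / u ^ (2 * r)) *
      ((\<integral>\<^sup>+ x. ennreal (exp (u * X x)) \<partial>M) + (\<integral>\<^sup>+ x. ennreal (exp ((- u) * X x)) \<partial>M))"
    by (rule nn_integral_even_power_le_exp[OF _ u]) measurable
  also have "\<dots> \<le> ennreal (fact (2 * r) / u ^ (2 * r)) * (ennreal (exp 1) + ennreal (exp 1))"
    by (intro mult_left_mono add_mono mgf) simp_all
  also have "ennreal (exp 1) + ennreal (exp 1) = ennreal (2 * exp 1)"
    by (metis ennreal_plus exp_ge_zero mult_2)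
  also have "ennreal (fact (2 * r) / u ^ (2 * r)) * ennreal (2 * exp 1)
      = ennreal (2 * exp 1 * fact (2 * r) * (K\<^sup>2 * \<kappa>) ^ r)"
    unfolding C using \<kappa> by (subst ennreal_mult[symmetric]) (auto simp: mult_ac)
  finally have "(\<integral>\<^sup>+ x. ennreal (X x ^ (2 * r)) \<partial>M) \<le> ennreal (2 * exp 1 * fact (2 * r) * (K\<^sup>2 * \<kappa>) ^ r)" .
  moreover have "0 \<le> X x ^ (2 * r)" for x
    by (rule zero_le_even_power) simp
  moreover have "(\<lambda>x. X x ^ (2 * r)) \<in> borel_measurable M" by measurable
  moreover have "0 \<le> 2 * exp 1 * fact (2 * r) * (K\<^sup>2 * \<kappa>) ^ r" using \<kappa> by simp
  ultimately show "integrable M (\<lambda>x. (\<Sum>k\<in>I. c k * z k x) ^ (2 * r))"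
    and "expectation (\<lambda>x. (\<Sum>k\<in>I. c k * z k x) ^ (2 * r)) \<le> 2 * exp 1 * fact (2 * r) * (K\<^sup>2 * \<kappa>) ^ r"
    using integral_le_of_nn_integral_le[of "\<lambda>x. X x ^ (2 * r)"] unfolding X_def by blast+
qed

end

section \<open>Entrywise concentration of the block sample covariance\<close>

text \<open>From \<open>E (XY - c)\<^sup>4 \<le> 4 E X\<^sup>8 + 4 E Y\<^sup>8 + 8c\<^sup>4\<close> for two row combinations \<open>X, Y\<close>, whose
  eighth moments are at most \<open>2e 8! (K\<^sup>2\<kappa>)\<^sup>4\<close>.\<close>

definition centered_product_moment_bound :: "real \<Rightarrow> real \<Rightarrow> real" where
  "centered_product_moment_bound \<kappa> K = 16 * exp 1 * fact 8 * (K\<^sup>2 * \<kappa>) ^ 4 + 8 * \<kappa> ^ 4"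

definition deviation_const :: "real \<Rightarrow> real \<Rightarrow> real" where
  "deviation_const \<kappa> K =
    centered_product_moment_bound \<kappa> K + 3 * (1 + centered_product_moment_bound \<kappa> K)\<^sup>2"

lemma block_sample_cov_mult_entry:
  fixes Z :: "nat \<Rightarrow> nat \<Rightarrow> real" and S :: "real mat"
  assumes S: "S \<in> carrier_mat q q" and i: "i < q" and j: "j < q" and blk: "same_block bs i j"
  shows "block_sample_cov bs (mat N q (\<lambda>(l, k). Z l k) * S) $$ (i, j)
    = (\<Sum>l<N. (\<Sum>k<q. S $$ (k, i) * Z l k) * (\<Sum>k<q. S $$ (k, j) * Z l k)) / real N"
  using assms by (simp add: block_sample_cov_def scalar_prod_def atLeast0LessThan mult.commute)

lemma op_norm_block_sample_cov_gt_imp_entry_deviation: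
  fixes Z :: "nat \<Rightarrow> nat \<Rightarrow> real" and S Sig :: "real mat"
  assumes S: "S \<in> carrier_mat q q" "transpose_mat S = S" "S * S = Sig"
    and blocks: "block_diagonal bs Sig" "\<And>b. b \<in> set bs \<Longrightarrow> b \<le> m"
    and N: "0 < N" and \<eta>: "0 \<le> \<eta>" and \<epsilon>: "real m * \<eta> \<le> \<epsilon>"
    and gt: "\<epsilon> < op_norm (block_sample_cov bs (mat N q (\<lambda>(l, k). Z l k) * S) - Sig)"
  shows "\<exists>i<q. \<exists>j<q. same_block bs i j \<and> real N * \<eta> \<le>
    \<bar>\<Sum>l<N. (\<Sum>k<q. S $$ (k, i) * Z l k) * (\<Sum>k<q. S $$ (k, j) * Z l k) - (\<Sum>k<q. S $$ (k, i) * S $$ (k, j))\<bar>"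
proof (rule ccontr)
  assume small: "\<not> ?thesis"
  let ?X = "mat N q (\<lambda>(l, k). Z l k) * S"
  have "\<bar>block_sample_cov bs ?X $$ (i, j) - Sig $$ (i, j)\<bar> \<le> \<eta>"
    if ij: "i < q" "j < q" "same_block bs i j" for i j
  proof -
    define P where "P l = (\<Sum>k<q. S $$ (k, i) * Z l k) * (\<Sum>k<q. S $$ (k, j) * Z l k)" for l
    define c where "c = (\<Sum>k<q. S $$ (k, i) * S $$ (k, j))"
    have "Sig $$ (i, j) = c"
      using S ij sym_mat_entry[OF S(1,2)] by (auto simp: c_def scalar_prod_def atLeast0LessThan)
    then have "block_sample_cov bs ?X $$ (i, j) - Sig $$ (i, j) = (\<Sum>l<N. P l - c) / real N"
      using block_sample_cov_mult_entry[OF S(1) ij] N by (simp add: P_def sum_subtractf field_simps)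
    moreover have "\<not> real N * \<eta> \<le> \<bar>\<Sum>l<N. P l - c\<bar>"
      using small ij unfolding P_def c_def by blast
    moreover have "\<bar>x / real N\<bar> \<le> \<eta> \<longleftrightarrow> \<bar>x\<bar> \<le> \<eta> * real N" for x
      using N by (simp add: abs_divide pos_divide_le_eq)
    ultimately show ?thesis by (simp add: mult.commute)
  qed
  then have "op_norm (block_sample_cov bs ?X - Sig) \<le> real m * \<eta>"
    using S blocks \<eta> by (intro op_norm_block_sample_cov_diff_le) auto
  then show False using gt \<epsilon> by simp
qed

locale subgaussian_design = prob_space M for M :: "'a measure" +
  fixes z :: "nat \<Rightarrow> nat \<Rightarrow> 'a \<Rightarrow> real" and N q :: nat and K :: real
  assumes indep: "indep_vars (\<lambda>_. borel) (\<lambda>(i, j). z i j) ({..<N} \<times> {..<q})"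
    and integrable_z: "\<And>i j. i < N \<Longrightarrow> j < q \<Longrightarrow> integrable M (z i j)"
    and mean_zero: "\<And>i j. i < N \<Longrightarrow> j < q \<Longrightarrow> expectation (z i j) = 0"
    and integrable_z_square: "\<And>i j. i < N \<Longrightarrow> j < q \<Longrightarrow> integrable M (\<lambda>x. (z i j x)\<^sup>2)"
    and variance_one: "\<And>i j. i < N \<Longrightarrow> j < q \<Longrightarrow> expectation (\<lambda>x. (z i j x)\<^sup>2) = 1"
    and subgaussian: "\<And>i j. i < N \<Longrightarrow> j < q \<Longrightarrow> subgaussian_norm_le M (z i j) K"
    and K_pos: "0 < K"
begin

lemma z_measurable: "i < N \<Longrightarrow> j < q \<Longrightarrow> z i j \<in> borel_measurable M"
  using integrable_z by auto

lemma indep_row: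
  assumes "l < N"
  shows "indep_vars (\<lambda>_. borel) (z l) {..<q}"
proof -
  have "indep_vars (\<lambda>_. borel) (\<lambda>(i, j). z i j) ((\<lambda>k. (l, k)) ` {..<q})"
    using assms by (intro indep_vars_subset[OF indep]) auto
  from indep_vars_reindex[OF _ this] show ?thesis by (simp add: inj_on_def)
qed

lemma indep_row_functions:
  assumes F: "F \<in> borel_measurable (Pi\<^sub>M {..<q} (\<lambda>_. borel))"
  shows "indep_vars (\<lambda>_. borel) (\<lambda>l x. F (\<lambda>k\<in>{..<q}. z l k x)) {..<N}"
proof -
  define R where "R l = {l} \<times> {..<q}" for l :: nat
  have "indep_vars (\<lambda>l. Pi\<^sub>M (R l) (\<lambda>_. borel)) (\<lambda>l x. \<lambda>ij\<in>R l. (\<lambda>(i, j). z i j) ij x) {..<N}"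
    by (rule indep_vars_restrict[OF indep]) (auto simp: R_def disjoint_family_on_def)
  moreover have "(\<lambda>f. F (\<lambda>k\<in>{..<q}. f (l, k))) \<in> borel_measurable (Pi\<^sub>M (R l) (\<lambda>_. borel))" for l
    by (intro measurable_compose[OF _ F] measurable_restrict measurable_component_singleton)
      (auto simp: R_def)
  ultimately have "indep_vars (\<lambda>_. borel)
      (\<lambda>l x. F (\<lambda>k\<in>{..<q}. (\<lambda>ij\<in>R l. (\<lambda>(i, j). z i j) ij x) (l, k))) {..<N}"
    by (rule indep_vars_compose2)
  then show ?thesis by (simp add: R_def cong: restrict_cong)
qed

lemma row_even_moment_le:
  assumes "l < N" and "0 < \<kappa>" and "(\<Sum>k<q. (c k)\<^sup>2) \<le> \<kappa>"
  shows "integrable M (\<lambda>x. (\<Sum>k<q. c k * z l k x) ^ (2 * r))"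
    and "expectation (\<lambda>x. (\<Sum>k<q. c k * z l k x) ^ (2 * r)) \<le> 2 * exp 1 * fact (2 * r) * (K\<^sup>2 * \<kappa>) ^ r"
  using subgaussian_lin_comb_even_moment_le[OF indep_row[OF assms(1)] _ _ _ _ K_pos assms(2), where c = c]
    assms(1,3) integrable_z mean_zero subgaussian by auto

lemma row_cross_moment:
  assumes "l < N"
  shows "integrable M (\<lambda>x. (\<Sum>k<q. a k * z l k x) * (\<Sum>k<q. b k * z l k x))"
    and "expectation (\<lambda>x. (\<Sum>k<q. a k * z l k x) * (\<Sum>k<q. b k * z l k x)) = (\<Sum>k<q. a k * b k)"
  using expectation_lin_comb_mult[OF indep_row[OF assms], where a = a and b = b]
    assms integrable_z mean_zero integrable_z_square variance_one by auto

lemma centered_row_product_fourth_moment_le: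
  assumes l: "l < N" and \<kappa>: "0 < \<kappa>" and a: "(\<Sum>k<q. (a k)\<^sup>2) \<le> \<kappa>" and b: "(\<Sum>k<q. (b k)\<^sup>2) \<le> \<kappa>"
  defines "W x \<equiv> (\<Sum>k<q. a k * z l k x) * (\<Sum>k<q. b k * z l k x) - (\<Sum>k<q. a k * b k)"
  shows "integrable M (\<lambda>x. W x ^ 4)" and "expectation (\<lambda>x. W x ^ 4) \<le> centered_product_moment_bound \<kappa> K"
proof -
  define c where "c = (\<Sum>k<q. a k * b k)"
  define Xa where "Xa x = (\<Sum>k<q. a k * z l k x)" for x
  define Xb where "Xb x = (\<Sum>k<q. b k * z l k x)" for x
  have "\<bar>a k * b k\<bar> \<le> ((a k)\<^sup>2 + (b k)\<^sup>2) / 2" for k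
    using sum_squares_bound[of "\<bar>a k\<bar>" "\<bar>b k\<bar>"] by (simp add: abs_mult mult_ac)
  then have "\<bar>c\<bar> \<le> (\<Sum>k<q. ((a k)\<^sup>2 + (b k)\<^sup>2) / 2)"
    unfolding c_def by (intro order_trans[OF sum_abs sum_mono])
  also have "\<dots> \<le> \<kappa>" using a b by (simp add: sum.distrib flip: sum_divide_distrib)
  finally have "c ^ 4 \<le> \<kappa> ^ 4"
    using power_mono[of "\<bar>c\<bar>" \<kappa> 4] by (simp add: power_even_abs)
  have bound: "W x ^ 4 \<le> 4 * Xa x ^ 8 + 4 * Xb x ^ 8 + 8 * \<kappa> ^ 4" for x
  proof -
    have "W x ^ 4 \<le> 8 * ((Xa x * Xb x) ^ 4 + c ^ 4)"
      unfolding W_def Xa_def Xb_def c_def by (rule power4_diff_le)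
    also have "\<dots> \<le> 8 * ((Xa x ^ 8 + Xb x ^ 8) / 2 + \<kappa> ^ 4)"
      using power4_mult_le[of "Xa x" "Xb x"] \<open>c ^ 4 \<le> \<kappa> ^ 4\<close> by (intro mult_left_mono add_mono) auto
    finally show ?thesis by argo
  qed
  note Xa8 = row_even_moment_le[OF l \<kappa> a, of 4, folded Xa_def, simplified]
  note Xb8 = row_even_moment_le[OF l \<kappa> b, of 4, folded Xb_def, simplified]
  have ib: "integrable M (\<lambda>x. 4 * Xa x ^ 8 + 4 * Xb x ^ 8 + 8 * \<kappa> ^ 4)"
    using Xa8(1) Xb8(1) by simp
  have [measurable]: "W \<in> borel_measurable M"
    unfolding W_def using z_measurable l by (intro borel_measurable_diff borel_measurable_times borel_measurable_sum) auto
  show iW: "integrable M (\<lambda>x. W x ^ 4)"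
    using bound by (intro Bochner_Integration.integrable_bound[OF ib]) (auto intro!: AE_I2 add_nonneg_nonneg)
  have "expectation (\<lambda>x. W x ^ 4) \<le> expectation (\<lambda>x. 4 * Xa x ^ 8 + 4 * Xb x ^ 8 + 8 * \<kappa> ^ 4)"
    by (rule integral_mono[OF iW ib bound])
  also have "\<dots> \<le> centered_product_moment_bound \<kappa> K"
    using Xa8 Xb8 ib prob_space by (simp add: centered_product_moment_bound_def)
  finally show "expectation (\<lambda>x. W x ^ 4) \<le> centered_product_moment_bound \<kappa> K" .
qed

lemma prob_row_products_deviation_le:
  assumes \<kappa>: "0 < \<kappa>" and a: "(\<Sum>k<q. (a k)\<^sup>2) \<le> \<kappa>" and b: "(\<Sum>k<q. (b k)\<^sup>2) \<le> \<kappa>"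
    and N: "0 < N" and \<eta>: "0 < \<eta>"
  shows "prob {x \<in> space M. real N * \<eta> \<le>
      \<bar>\<Sum>l<N. (\<Sum>k<q. a k * z l k x) * (\<Sum>k<q. b k * z l k x) - (\<Sum>k<q. a k * b k)\<bar>}
    \<le> deviation_const \<kappa> K / ((real N)\<^sup>2 * \<eta> ^ 4)"
proof -
  define c where "c = (\<Sum>k<q. a k * b k)"
  define F where "F f = (\<Sum>k<q. a k * f k) * (\<Sum>k<q. b k * f k) - c" for f :: "nat \<Rightarrow> real"
  define W where "W l x = F (\<lambda>k\<in>{..<q}. z l k x)" for l x
  have W: "W l x = (\<Sum>k<q. a k * z l k x) * (\<Sum>k<q. b k * z l k x) - c" for l x
    unfolding W_def F_def by simp
  define B where "B = centered_product_moment_bound \<kappa> K"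
  have "F \<in> borel_measurable (Pi\<^sub>M {..<q} (\<lambda>_. borel))"
    unfolding F_def by measurable
  then have indW: "indep_vars (\<lambda>_. borel) W {..<N}"
    unfolding W_def by (rule indep_row_functions)
  have W4: "integrable M (\<lambda>x. W l x ^ 4)" "expectation (\<lambda>x. W l x ^ 4) \<le> B" if "l < N" for l
    using centered_row_product_fourth_moment_le[OF that \<kappa> a b] unfolding W c_def B_def by auto
  have W1: "expectation (W l) = 0" if "l < N" for l
    using row_cross_moment[OF that, of a b] prob_space unfolding W c_def by simp
  have W2: "expectation (\<lambda>x. W l x ^ 2) \<le> 1 + B" if l: "l < N" for l
    using expectation_square_le_one_plus_fourth[of "W l"] W4[OF l] indW l
    unfolding indep_vars_def by fastforce
  define T where "T x = (\<Sum>l<N. W l x)" for x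
  have T4: "integrable M (\<lambda>x. T x ^ 4)"
    "expectation (\<lambda>x. T x ^ 4) \<le> real N * B + 3 * (real N)\<^sup>2 * (1 + B)\<^sup>2"
    using indep_vars_sum_fourth_moment_le[OF _ indW, of "1 + B" B] W4 W1 W2 unfolding T_def by auto
  have "0 \<le> B" unfolding B_def centered_product_moment_bound_def using \<kappa> by simp
  have "real N * B \<le> (real N)\<^sup>2 * B"
    using N \<open>0 \<le> B\<close> by (intro mult_right_mono) (auto simp: power2_eq_square)
  then have ET4: "expectation (\<lambda>x. T x ^ 4) \<le> (real N)\<^sup>2 * deviation_const \<kappa> K"
    using T4(2) unfolding deviation_const_def B_def[symmetric] by (simp add: algebra_simps)
  have "prob {x \<in> space M. real N * \<eta> \<le> \<bar>T x\<bar>} \<le> expectation (\<lambda>x. T x ^ 4) / (real N * \<eta>) ^ 4"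
    using T4(1) N \<eta> by (intro prob_abs_ge_le_fourth_moment) auto
  also have "\<dots> \<le> (real N)\<^sup>2 * deviation_const \<kappa> K / (real N * \<eta>) ^ 4"
    using ET4 N \<eta> by (intro divide_right_mono) auto
  also have "\<dots> = deviation_const \<kappa> K / ((real N)\<^sup>2 * \<eta> ^ 4)"
    using N \<eta> by (simp add: field_simps power2_eq_square eval_nat_numeral)
  finally show ?thesis unfolding T_def W c_def .
qed

lemma prob_op_norm_block_sample_cov_deviation_le:
  fixes S Sig :: "real mat"
  assumes S: "S \<in> carrier_mat q q" "transpose_mat S = S" "S * S = Sig"
    and blocks: "block_diagonal bs Sig" "\<And>b. b \<in> set bs \<Longrightarrow> b \<le> m"
    and eig: "\<And>e. eigenvalue Sig e \<Longrightarrow> \<bar>e\<bar> \<le> \<kappa>" and \<kappa>: "0 < \<kappa>"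
    and N: "0 < N" and \<eta>: "0 < \<eta>" and \<epsilon>: "real m * \<eta> \<le> \<epsilon>"
  shows "prob {x \<in> space M. \<epsilon> < op_norm (block_sample_cov bs (mat N q (\<lambda>(i, j). z i j x) * S) - Sig)}
    \<le> real q * (real m * deviation_const \<kappa> K / \<eta> ^ 4) / (real N)\<^sup>2"
proof -
  define T where "T i j x = (\<Sum>l<N. (\<Sum>k<q. S $$ (k, i) * z l k x) * (\<Sum>k<q. S $$ (k, j) * z l k x)
    - (\<Sum>k<q. S $$ (k, i) * S $$ (k, j)))" for i j x
  define A where "A = (\<lambda>(i, j). {x \<in> space M. real N * \<eta> \<le> \<bar>T i j x\<bar>})"
  define P where "P = Sigma {..<q} (\<lambda>i. {j \<in> {..<q}. same_block bs i j})"
  have Sig: "Sig \<in> carrier_mat q q" "transpose_mat Sig = Sig"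
    using S transpose_mult[OF S(1) S(1)] by auto
  have column: "(\<Sum>k<q. (S $$ (k, i))\<^sup>2) \<le> \<kappa>" if "i < q" for i
    using sym_abs_diag_le_eigenvalue_bound[OF Sig eig that] S that sym_mat_entry[OF S(1,2)]
    by (auto simp: scalar_prod_def atLeast0LessThan power2_eq_square)
  have "A ij \<in> events" for ij
    unfolding A_def T_def using z_measurable by (auto split: prod.split)
  have "{x \<in> space M. \<epsilon> < op_norm (block_sample_cov bs (mat N q (\<lambda>(i, j). z i j x) * S) - Sig)}
      \<subseteq> (\<Union>ij\<in>P. A ij)"
  proof
    fix x assume x: "x \<in> {x \<in> space M. \<epsilon> < op_norm (block_sample_cov bs (mat N q (\<lambda>(i, j). z i j x) * S) - Sig)}"
    then obtain i j where "i < q" "j < q" "same_block bs i j" "real N * \<eta> \<le> \<bar>T i j x\<bar>"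
      using op_norm_block_sample_cov_gt_imp_entry_deviation[OF S blocks N _ \<epsilon>, of "\<lambda>l k. z l k x"] \<eta>
      unfolding T_def by auto
    then show "x \<in> (\<Union>ij\<in>P. A ij)" using x unfolding P_def A_def by auto
  qed
  then have "prob {x \<in> space M. \<epsilon> < op_norm (block_sample_cov bs (mat N q (\<lambda>(i, j). z i j x) * S) - Sig)}
      \<le> prob (\<Union>ij\<in>P. A ij)"
    using \<open>\<And>ij. A ij \<in> events\<close> unfolding P_def by (intro finite_measure_mono) auto
  also have "\<dots> \<le> (\<Sum>ij\<in>P. prob (A ij))"
    using \<open>\<And>ij. A ij \<in> events\<close> unfolding P_def by (intro finite_measure_subadditive_finite) auto
  also have "\<dots> \<le> real (card P) * (deviation_const \<kappa> K / ((real N)\<^sup>2 * \<eta> ^ 4))"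
    using column \<kappa> N \<eta> unfolding P_def A_def T_def
    by (intro sum_bounded_above) (auto intro!: prob_row_products_deviation_le)
  also have "\<dots> \<le> real (q * m) * (deviation_const \<kappa> K / ((real N)\<^sup>2 * \<eta> ^ 4))"
  proof (rule mult_right_mono)
    show "real (card P) \<le> real (q * m)"
      unfolding P_def of_nat_le_iff by (rule card_same_block_pairs_le[OF blocks(2)])
  qed (use \<kappa> in \<open>simp add: deviation_const_def centered_product_moment_bound_def\<close>)
  also have "\<dots> = real q * (real m * deviation_const \<kappa> K / \<eta> ^ 4) / (real N)\<^sup>2"
    by (simp add: mult.commute)
  finally show ?thesis .
qed

end

lemma tendsto_zero_if_le_linear_over_square:
  fixes f :: "nat \<Rightarrow> real" and p :: "nat \<Rightarrow> nat"
  assumes ratio: "(\<lambda>n. real (p n) / real n) \<longlonglongrightarrow> \<delta>"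
    and f: "\<And>n. 0 < n \<Longrightarrow> 0 \<le> f n" "\<And>n. 0 < n \<Longrightarrow> f n \<le> real (p n) * C / (real n)\<^sup>2"
  shows "f \<longlonglongrightarrow> 0"
proof -
  have "(\<lambda>n. real (p n) / real n * C * inverse (real n)) \<longlonglongrightarrow> \<delta> * C * 0"
    by (intro tendsto_mult ratio tendsto_const lim_inverse_n)
  moreover have "eventually (\<lambda>n. 0 \<le> f n \<and> f n \<le> real (p n) / real n * C * inverse (real n)) sequentially"
    using f by (intro eventually_sequentiallyI[of 1]) (simp add: power2_eq_square field_simps)
  ultimately show ?thesis
    by (intro tendsto_sandwich[OF _ _ tendsto_const, of _ f]) (auto elim: eventually_mono)
qed

theorem proposition2:
  fixes M :: "nat \<Rightarrow> 'a measure"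
    and p :: "nat \<Rightarrow> nat"
    and \<delta> \<kappa>min \<kappa>max K :: real
    and m :: nat
    and bs :: "nat \<Rightarrow> nat list"
    and Sigma S :: "nat \<Rightarrow> real mat"
    and z :: "nat \<Rightarrow> nat \<Rightarrow> nat \<Rightarrow> 'a \<Rightarrow> real"
  assumes ps: "\<And>n. prob_space (M n)"
    and ratio: "(\<lambda>n. real (p n) / real n) \<longlonglongrightarrow> \<delta>"
    and delta_pos: "0 < \<delta>"
    and kappa: "0 < \<kappa>min" "\<kappa>min \<le> \<kappa>max"
    and Sigma_dim: "\<And>n. Sigma n \<in> carrier_mat (p n) (p n)"
    and Sigma_sym: "\<And>n. transpose_mat (Sigma n) = Sigma n"
    and Sigma_eig: "\<And>n e. eigenvalue (Sigma n) e \<Longrightarrow> \<kappa>min \<le> e \<and> e \<le> \<kappa>max"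
    and blocks_sum: "\<And>n. sum_list (bs n) = p n"
    and blocks_size: "\<And>n b. b \<in> set (bs n) \<Longrightarrow> b \<le> m"
    and Sigma_block: "\<And>n. block_diagonal (bs n) (Sigma n)"
    and S_dim: "\<And>n. S n \<in> carrier_mat (p n) (p n)"
    and S_sym: "\<And>n. transpose_mat (S n) = S n"
    and S_psd: "\<And>n e. eigenvalue (S n) e \<Longrightarrow> 0 \<le> e"
    and S_sq: "\<And>n. S n * S n = Sigma n"
    and indep: "\<And>n. prob_space.indep_vars (M n) (\<lambda>_. borel) (\<lambda>(i, j). z n i j) ({..<n} \<times> {..<p n})"
    and integrable: "\<And>n i j. i < n \<Longrightarrow> j < p n \<Longrightarrow> integrable (M n) (z n i j)"
    and mean0: "\<And>n i j. i < n \<Longrightarrow> j < p n \<Longrightarrow> prob_space.expectation (M n) (z n i j) = 0"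
    and sq_integrable: "\<And>n i j. i < n \<Longrightarrow> j < p n \<Longrightarrow> integrable (M n) (\<lambda>x. (z n i j x)\<^sup>2)"
    and var1: "\<And>n i j. i < n \<Longrightarrow> j < p n \<Longrightarrow> prob_space.expectation (M n) (\<lambda>x. (z n i j x)\<^sup>2) = 1"
    and K_pos: "0 < K"
    and subg: "\<And>n i j. i < n \<Longrightarrow> j < p n \<Longrightarrow> subgaussian_norm_le (M n) (z n i j) K"
  shows "\<And>\<epsilon>. 0 < \<epsilon> \<Longrightarrow>
    (\<lambda>n. measure (M n) {\<omega> \<in> space (M n).
        op_norm (block_sample_cov (bs n) (mat n (p n) (\<lambda>(i, j). z n i j \<omega>) * S n) - Sigma n) > \<epsilon>})
    \<longlonglongrightarrow> 0"
proof -
  fix \<epsilon> :: real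
  assume "0 < \<epsilon>"
  define \<eta> where "\<eta> = \<epsilon> / real (Suc m)"
  have \<eta>: "0 < \<eta>" "real m * \<eta> \<le> \<epsilon>"
    unfolding \<eta>_def using \<open>0 < \<epsilon>\<close> by (auto simp: field_simps)
  show "(\<lambda>n. measure (M n) {\<omega> \<in> space (M n).
      op_norm (block_sample_cov (bs n) (mat n (p n) (\<lambda>(i, j). z n i j \<omega>) * S n) - Sigma n) > \<epsilon>})
    \<longlonglongrightarrow> 0"
  proof (rule tendsto_zero_if_le_linear_over_square[OF ratio])
    fix n :: nat
    assume "0 < n"
    interpret subgaussian_design "M n" "z n" n "p n" K
      using ps[of n] indep[of n] integrable[of _ n] mean0[of _ n] sq_integrable[of _ n] var1[of _ n]
        subg[of _ n] K_pos
      by (simp add: subgaussian_design_def subgaussian_design_axioms_def)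
    show "measure (M n) {\<omega> \<in> space (M n).
        op_norm (block_sample_cov (bs n) (mat n (p n) (\<lambda>(i, j). z n i j \<omega>) * S n) - Sigma n) > \<epsilon>}
      \<le> real (p n) * (real m * deviation_const \<kappa>max K / \<eta> ^ 4) / (real n)\<^sup>2"
      using Sigma_eig kappa
      by (intro prob_op_norm_block_sample_cov_deviation_le[OF S_dim S_sym S_sq Sigma_block blocks_size
          _ _ \<open>0 < n\<close> \<eta>]) force+
  qed simp
qed

end
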